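(* Let $\varepsilon>0$ and choose $\alpha$ with $0<\alpha\leq \varepsilon/(2M)$. If a pair $(x,s)\in\mathrm{dom}\, h\times\mathbb{R}^n$ satisfies $\phi^\alpha(x)+\psi^\alpha(s)\leq\varepsilon/2$, then $\phi(x)-\phi_*\leq \varepsilon$.
   Context: Let $\|\cdot\|$ be a norm on $\mathbb{R}^n$ with dual norm $\|\cdot\|_*$. Let $f:\mathbb{R}^n\to\mathbb{R}$ be convex, differentiable and $L$-smooth ($L>0$) with respect to $\|\cdot\|$, and let $h:\mathbb{R}^n\to(-\infty,\infty]$ be closed proper convex with bounded domain $\mathrm{dom}\, h$. Let $w:\mathbb{R}^n\to[0,+\infty]$ be non-negative, closed, and $1$-strongly convex with respect to $\|\cdot\|$ on $\mathrm{dom}\, h$, with $M:=\max_{x\in\mathrm{dom}\, h}w(x)<\infty$. Define $\phi=f+h$, $\phi_*=\min_{x\in\mathbb{R}^n}\phi(x)$, and for $\alpha>0$: $h^\alpha=h+\alpha w$, $\phi^\alpha=f+h^\alpha$, and $\psi^\alpha(z)=(h^\alpha)^*(-z)+f^*(z)$, where $g^*(y)=\sup_x\{\langle y,x\rangle-g(x)\}$ denotes the convex conjugate. *)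

theory Defs
  imports "HOL-Analysis.Analysis"
begin

definition is_norm :: "(real^'n \<Rightarrow> real) \<Rightarrow> bool" where
  "is_norm N \<longleftrightarrow> (\<forall>x. N x \<ge> 0) \<and> (\<forall>x. N x = 0 \<longleftrightarrow> x = 0) \<and>
     (\<forall>c x. N (c *\<^sub>R x) = \<bar>c\<bar> * N x) \<and> (\<forall>x y. N (x + y) \<le> N x + N y)"

definition dual_norm :: "(real^'n \<Rightarrow> real) \<Rightarrow> real^'n \<Rightarrow> real" where
  "dual_norm N y = (SUP x\<in>{x. N x \<le> 1}. y \<bullet> x)"

definition L_smooth :: "(real^'n \<Rightarrow> real) \<Rightarrow> real \<Rightarrow> (real^'n \<Rightarrow> real) \<Rightarrow> bool" where
  "L_smooth N L f \<longleftrightarrow> (\<exists>g. (\<forall>x. (f has_derivative (\<lambda>v. g x \<bullet> v)) (at x)) \<and>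
      (\<forall>x y. dual_norm N (g x - g y) \<le> L * N (x - y)))"

definition edom :: "('a \<Rightarrow> ereal) \<Rightarrow> 'a set" where
  "edom h = {x. h x < \<infinity>}"

definition econvex :: "(real^'n \<Rightarrow> ereal) \<Rightarrow> bool" where
  "econvex h \<longleftrightarrow> (\<forall>x y t. 0 \<le> t \<and> t \<le> 1 \<longrightarrow>
     h (t *\<^sub>R x + (1 - t) *\<^sub>R y) \<le> ereal t * h x + ereal (1 - t) * h y)"

definition eclosed :: "(real^'n \<Rightarrow> ereal) \<Rightarrow> bool" where
  "eclosed h \<longleftrightarrow> closed {(x, t::real). h x \<le> ereal t}"

definition eproper :: "(real^'n \<Rightarrow> ereal) \<Rightarrow> bool" where
  "eproper h \<longleftrightarrow> (\<forall>x. h x \<noteq> -\<infinity>) \<and> (\<exists>x. h x < \<infinity>)"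

text \<open>1-strong convexity w.r.t. N on a set D (sigma = 1).\<close>
definition strongly_convex_on_wrt :: "(real^'n \<Rightarrow> real) \<Rightarrow> (real^'n) set \<Rightarrow> (real^'n \<Rightarrow> ereal) \<Rightarrow> bool" where
  "strongly_convex_on_wrt N D w \<longleftrightarrow> (\<forall>x\<in>D. \<forall>y\<in>D. \<forall>t. 0 \<le> t \<and> t \<le> 1 \<longrightarrow>
     w (t *\<^sub>R x + (1 - t) *\<^sub>R y) \<le> ereal t * w x + ereal (1 - t) * w y
        - ereal (t * (1 - t) / 2 * (N (x - y))\<^sup>2))"

definition econj :: "(real^'n \<Rightarrow> ereal) \<Rightarrow> real^'n \<Rightarrow> ereal" where
  "econj g y = (SUP x. ereal (y \<bullet> x) - g x)"

end

theory Submission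
  imports Defs
begin

text \<open>
  The argument is weak duality plus a comparison of \<open>\<phi>\<close> with its smoothing \<open>\<phi>\<^sup>\<alpha>\<close>.
  By Fenchel-Young, \<open>\<phi>\<^sup>\<alpha>(y) + \<psi>\<^sup>\<alpha>(s) \<ge> 0\<close> for every \<open>y\<close>, so the gap hypothesis
  gives \<open>\<phi>\<^sup>\<alpha>(x) - \<phi>\<^sup>\<alpha>(y) \<le> \<epsilon>/2\<close>. Since \<open>0 \<le> \<alpha> w \<le> \<alpha> M \<le> \<epsilon>/2\<close> on \<open>dom h\<close>,
  passing from \<open>\<phi>\<^sup>\<alpha>\<close> to \<open>\<phi>\<close> costs at most another \<open>\<epsilon>/2\<close>.
\<close>

lemma fenchel_young: "ereal (y \<bullet> z) - g z \<le> econj g y"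
  unfolding econj_def by (rule SUP_upper) simp

lemma econj_add_econj_ge:
  assumes "F y = ereal a" and "G y = ereal b"
  shows "ereal (- (a + b)) \<le> econj G (- s) + econj F s"
proof -
  have "ereal (- (a + b)) = ereal (- s \<bullet> y - b) + ereal (s \<bullet> y - a)"
    by simp
  also have "\<dots> \<le> econj G (- s) + econj F s"
    using fenchel_young[of "- s" y G] fenchel_young[of s y F] by (intro add_mono) (simp_all add: assms)
  finally show ?thesis .
qed

lemma duality_gap_bounds_suboptimality:
  assumes "F x = ereal a" "G x = ereal b" "F y = ereal c" "G y = ereal d"
    and gap: "(F x + G x) + (econj G (- s) + econj F s) \<le> ereal \<delta>"
  shows "(a + b) - (c + d) \<le> \<delta>"
proof -
  have "ereal (a + b) + ereal (- (c + d)) \<le> ereal (a + b) + (econj G (- s) + econj F s)"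
    by (rule add_left_mono[OF econj_add_econj_ge[of F y c G d s, OF assms(3,4)]])
  also have "\<dots> \<le> ereal \<delta>"
    using gap by (simp add: assms(1,2))
  finally show ?thesis by simp
qed

lemma eproper_edom_real:
  assumes "eproper h" and "y \<in> edom h"
  obtains a where "h y = ereal a"
proof -
  have "h y \<noteq> - \<infinity>" "h y < \<infinity>"
    using assms unfolding eproper_def edom_def by auto
  then show ?thesis using that by (cases "h y") auto
qed

lemma ereal_between_real:
  assumes "0 \<le> u" and "u \<le> ereal M"
  obtains b where "u = ereal b" "0 \<le> b" "b \<le> M"
  using assms that by (cases u) auto

lemma INF_diff_le_of_lower_bound:
  fixes P :: "'a \<Rightarrow> ereal"
  assumes "P x = ereal p" and "\<And>y. ereal (p - \<delta>) \<le> P y"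
  shows "P x - (INF y. P y) \<le> ereal \<delta>"
proof -
  have lower: "ereal (p - \<delta>) \<le> (INF y. P y)"
    using assms(2) by (rule INF_greatest)
  have "(INF y. P y) \<le> ereal p"
    using INF_lower[of x UNIV P] assms(1) by simp
  with lower obtain i where "(INF y. P y) = ereal i"
    by (cases "INF y. P y") auto
  then show ?thesis
    using lower assms(1) by simp
qed

theorem lemma2p1:
  fixes N :: "real^'n \<Rightarrow> real" and f :: "real^'n \<Rightarrow> real"
    and h w :: "real^'n \<Rightarrow> ereal" and L M \<epsilon> \<alpha> :: real
    and x s :: "real^'n"
  assumes norm: "is_norm N"
    and f_convex: "convex_on UNIV f" and f_diff: "\<forall>x. f differentiable (at x)"
    and L_pos: "L > 0" and f_smooth: "L_smooth N L f"
    and h_closed: "eclosed h" and h_proper: "eproper h" and h_convex: "econvex h"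
    and h_bdd: "bounded (edom h)"
    and w_nonneg: "\<forall>x. w x \<ge> 0" and w_closed: "eclosed w"
    and w_sc: "strongly_convex_on_wrt N (edom h) w"
    and M_max: "\<exists>x0\<in>edom h. w x0 = ereal M" "\<forall>y\<in>edom h. w y \<le> ereal M"
    and eps: "\<epsilon> > 0" and alpha: "0 < \<alpha>" "\<alpha> * (2 * M) \<le> \<epsilon>"
    and x_dom: "x \<in> edom h"
    and gap: "(ereal (f x) + (h x + ereal \<alpha> * w x))
              + (econj (\<lambda>y. h y + ereal \<alpha> * w y) (- s) + econj (\<lambda>y. ereal (f y)) s)
              \<le> ereal (\<epsilon> / 2)"
  shows "(ereal (f x) + h x) - (INF y. ereal (f y) + h y) \<le> ereal \<epsilon>"
proof -
  have real_on_dom: "\<exists>a b. h y = ereal a \<and> w y = ereal b \<and> 0 \<le> b \<and> b \<le> M"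
    if "y \<in> edom h" for y
    using eproper_edom_real[OF h_proper that] ereal_between_real[of "w y" M]
      w_nonneg M_max(2) that by metis
  obtain hx wx where x_real: "h x = ereal hx" "w x = ereal wx" "0 \<le> wx"
    using real_on_dom[OF x_dom] by blast
  have "ereal (f x + hx - \<epsilon>) \<le> ereal (f y) + h y" for y
  proof (cases "y \<in> edom h")
    case True
    then obtain hy wy where y_real: "h y = ereal hy" "w y = ereal wy" "wy \<le> M"
      using real_on_dom by blast
    have "(f x + (hx + \<alpha> * wx)) - (f y + (hy + \<alpha> * wy)) \<le> \<epsilon> / 2"
      by (rule duality_gap_bounds_suboptimality[where y = y, OF _ _ _ _ gap]) (simp_all add: x_real y_real)
    moreover have "\<alpha> * wy \<le> \<alpha> * M" "0 \<le> \<alpha> * wx"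
      using y_real x_real alpha by (simp_all add: mult_left_mono)
    ultimately have "f x + hx - \<epsilon> \<le> f y + hy"
      using alpha by linarith
    then show ?thesis
      by (simp add: y_real)
  qed (simp add: edom_def)
  then show ?thesis
    by (intro INF_diff_le_of_lower_bound) (simp_all add: x_real)
qed

end
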